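(* In the reduction instance $NTP([a_j]_{j\in A},W)$, there exists $A'\subseteq A$ such that the block schedule $S(A')$ is an optimal schedule.
   Context: Reduction instance. Let $N\ge1$, $A=\{1,\dots,N\}$, positive integers $a_1,\dots,a_N$, positive integer $W\le\sum_{j\in A}a_j$. Set $M=N+\sum_{j\in A}a_j+1$, employees $\mathcal E=\{1,\dots,M\}$ (smaller index = more senior). For $k\in A$: $i_k=k+\sum_{j=1}^{k-1}a_j$ (critical employees), $\mathcal E^S_k=\{i: i_k<i\le i_k+a_k\}$ (stable block). Response delays: $r_{i_k}=\sum_{j=1}^{k}a_j$; for $i\in\mathcal E^S_k$, $r_i=\sum_{j=1}^{k-1}a_j$; $r_M=\sum_{j\in A}a_j$. Let $C^*_0=2\sum_j a_j$ and $H=C^*_0-W$. A schedule $S=(s_i,e_i)_{i\in\mathcal E}$ has $s_i\ge0$, $e_i=s_i+r_i$; it is feasible if $s_1\le\dots\le s_M$ and $e_i\le H$ for all $i$. $b_i=|\{j: i<j,\ e_j<e_i\}|$, $B(S)=\sum_i b_i$. A schedule is optimal if it is feasible and minimizes $B(S)$ among feasible schedules. Block schedule $S(A')$, $A'\subseteq A$: $s_1=0$; for $i\ge2$, $s_i=s_{i_k}+a_k$ if $i=i_k+1$ for some $k\in A\setminus A'$, and $s_i=s_{i-1}$ otherwise; $e_i=s_i+r_i$. *)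

theory Defs
  imports Main Complex_Main
begin

(* Instance parameters: N (number of items, A = {1..N}), sizes a :: nat => nat (a j for j in A),
   and W. Employees are 1..M. *)

definition total :: "nat \<Rightarrow> (nat \<Rightarrow> nat) \<Rightarrow> nat" where
  "total N a = (\<Sum>j\<in>{1..N}. a j)"

definition numEmp :: "nat \<Rightarrow> (nat \<Rightarrow> nat) \<Rightarrow> nat" where
  "numEmp N a = N + total N a + 1"

definition crit :: "(nat \<Rightarrow> nat) \<Rightarrow> nat \<Rightarrow> nat" where
  "crit a k = k + (\<Sum>j\<in>{1..<k}. a j)"

definition stable :: "(nat \<Rightarrow> nat) \<Rightarrow> nat \<Rightarrow> nat set" where
  "stable a k = {i. crit a k < i \<and> i \<le> crit a k + a k}"

definition resp :: "nat \<Rightarrow> (nat \<Rightarrow> nat) \<Rightarrow> nat \<Rightarrow> nat" where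
  "resp N a i =
     (if i = numEmp N a then total N a
      else if (\<exists>k\<in>{1..N}. i = crit a k)
        then (\<Sum>j\<in>{1..(THE k. k \<in> {1..N} \<and> i = crit a k)}. a j)
      else (\<Sum>j\<in>{1..<(THE k. k \<in> {1..N} \<and> i \<in> stable a k)}. a j))"

definition horizon :: "nat \<Rightarrow> (nat \<Rightarrow> nat) \<Rightarrow> nat \<Rightarrow> real" where
  "horizon N a W = 2 * real (total N a) - real W"

definition endt :: "nat \<Rightarrow> (nat \<Rightarrow> nat) \<Rightarrow> (nat \<Rightarrow> real) \<Rightarrow> nat \<Rightarrow> real" where
  "endt N a s i = s i + real (resp N a i)"

definition feasible :: "nat \<Rightarrow> (nat \<Rightarrow> nat) \<Rightarrow> nat \<Rightarrow> (nat \<Rightarrow> real) \<Rightarrow> bool" where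
  "feasible N a W s \<longleftrightarrow>
     (\<forall>i\<in>{1..numEmp N a}. 0 \<le> s i) \<and>
     (\<forall>i j. 1 \<le> i \<longrightarrow> i \<le> j \<longrightarrow> j \<le> numEmp N a \<longrightarrow> s i \<le> s j) \<and>
     (\<forall>i\<in>{1..numEmp N a}. endt N a s i \<le> horizon N a W)"

definition bcount :: "nat \<Rightarrow> (nat \<Rightarrow> nat) \<Rightarrow> (nat \<Rightarrow> real) \<Rightarrow> nat \<Rightarrow> nat" where
  "bcount N a s i = card {j\<in>{1..numEmp N a}. i < j \<and> endt N a s j < endt N a s i}"

definition Bval :: "nat \<Rightarrow> (nat \<Rightarrow> nat) \<Rightarrow> (nat \<Rightarrow> real) \<Rightarrow> nat" where
  "Bval N a s = (\<Sum>i\<in>{1..numEmp N a}. bcount N a s i)"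

definition optimal :: "nat \<Rightarrow> (nat \<Rightarrow> nat) \<Rightarrow> nat \<Rightarrow> (nat \<Rightarrow> real) \<Rightarrow> bool" where
  "optimal N a W s \<longleftrightarrow> feasible N a W s \<and>
     (\<forall>s'. feasible N a W s' \<longrightarrow> Bval N a s \<le> Bval N a s')"

fun blk :: "nat \<Rightarrow> (nat \<Rightarrow> nat) \<Rightarrow> nat set \<Rightarrow> nat \<Rightarrow> nat" where
  "blk N a A' 0 = 0"
| "blk N a A' (Suc n) =
     (if n = 0 then 0
      else if (\<exists>k\<in>{1..N} - A'. Suc n = crit a k + 1)
        then blk N a A' n + a (THE k. k \<in> {1..N} - A' \<and> Suc n = crit a k + 1)
      else blk N a A' n)"

definition blockSched :: "nat \<Rightarrow> (nat \<Rightarrow> nat) \<Rightarrow> nat set \<Rightarrow> nat \<Rightarrow> real" where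
  "blockSched N a A' i = real (blk N a A' i)"

end

(*
  For a feasible schedule s call block k overtaken when every employee of the stable block
  E^S_k ends before the critical employee i_k. Each overtaken block contributes a_k inversions,
  so B(s) is at least the total size of the overtaken blocks. Each block that is not overtaken
  forces the start times to climb by a_k between i_k and i_(k+1), so s_M is at least the total
  size of these blocks, and e_M <= H bounds that total by sum a - W.
  Conversely, the block schedule S(A') is feasible as soon as the blocks outside A' fit into
  the same budget, and its only inversions are the critical employees i_k, k in A', overtaken
  by their stable blocks, so B(S(A')) <= sum of a_k over A'. Hence S(A') for an A' of least
  weight within the budget is optimal.
*)

theory Submission
  imports Defs
begin

lemma crit_Suc: "k \<ge> 1 \<Longrightarrow> crit a (Suc k) = crit a k + a k + 1"
  unfolding crit_def by (simp add: atLeastLessThanSuc)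

lemma crit_Suc_N: "crit a (Suc N) = numEmp N a"
  unfolding crit_def numEmp_def total_def by (simp add: atLeastLessThanSuc_atLeastAtMost)

lemma le_crit: "k \<le> crit a k"
  unfolding crit_def by simp

lemma strict_mono_crit: "strict_mono (crit a)"
  unfolding strict_mono_Suc_iff crit_def
  by (simp add: atLeastLessThanSuc)

lemma crit_less_iff [simp]: "crit a k < crit a k' \<longleftrightarrow> k < k'"
  using strict_mono_crit strict_mono_less by blast

lemma crit_le_iff [simp]: "crit a k \<le> crit a k' \<longleftrightarrow> k \<le> k'"
  using strict_mono_crit strict_mono_less_eq by blast

lemma crit_eq_iff [simp]: "crit a k = crit a k' \<longleftrightarrow> k = k'"
  using strict_mono_crit strict_mono_eq by blast

lemma stable_eq: "stable a k = {crit a k<..crit a k + a k}"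
  unfolding stable_def by auto

lemma card_stable [simp]: "card (stable a k) = a k"
  by (simp add: stable_eq)

lemma finite_stable [simp]: "finite (stable a k)"
  by (simp add: stable_eq)

lemma in_block_iff:
  "k \<ge> 1 \<Longrightarrow> crit a k \<le> i \<and> i < crit a (Suc k) \<longleftrightarrow> i = crit a k \<or> i \<in> stable a k"
  unfolding stable_def using crit_Suc[of k a] by auto

lemma block_unique:
  assumes "crit a k \<le> i" "i < crit a (Suc k)" "crit a k' \<le> i" "i < crit a (Suc k')"
  shows "k = k'"
proof -
  have "crit a k < crit a (Suc k')" "crit a k' < crit a (Suc k)"
    using assms by linarith+
  then show ?thesis by simp
qed

lemma exists_block:
  "1 \<le> i \<Longrightarrow> i < crit a (Suc n) \<Longrightarrow> \<exists>k\<in>{1..n}. crit a k \<le> i \<and> i < crit a (Suc k)"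
proof (induction n)
  case (Suc n)
  then show ?case
    by (cases "i < crit a (Suc n)") force+
qed (simp add: crit_def)

lemma stable_less_crit_Suc_N:
  "k \<in> {1..N} \<Longrightarrow> j \<in> stable a k \<Longrightarrow> crit a k < j \<and> j < numEmp N a"
proof -
  assume k: "k \<in> {1..N}" and j: "j \<in> stable a k"
  then have "crit a k < j" "j < crit a (Suc k)"
    using in_block_iff[of k a j] by (auto simp: stable_def)
  moreover have "crit a (Suc k) \<le> crit a (Suc N)"
    using k by simp
  ultimately show ?thesis
    by (simp add: crit_Suc_N)
qed

lemma crit_mem_employees: "k \<in> {1..N} \<Longrightarrow> crit a k \<in> {1..numEmp N a}"
  using le_crit[of k a] crit_less_iff[of a k "Suc N"] by (auto simp: crit_Suc_N)

lemma resp_crit: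
  assumes "k \<in> {1..N}"
  shows "resp N a (crit a k) = (\<Sum>j\<in>{1..<Suc k}. a j)"
proof -
  have "crit a k \<noteq> numEmp N a"
    using assms crit_less_iff[of a k "Suc N"] by (auto simp: crit_Suc_N)
  moreover have "(THE k'. k' \<in> {1..N} \<and> crit a k = crit a k') = k"
    using assms by (intro the_equality) auto
  ultimately show ?thesis
    using assms unfolding resp_def by (auto simp: atLeastLessThanSuc_atLeastAtMost)
qed

lemma resp_stable:
  assumes k: "k \<in> {1..N}" and i: "i \<in> stable a k"
  shows "resp N a i = (\<Sum>j\<in>{1..<k}. a j)"
proof -
  have block: "crit a k \<le> i" "i < crit a (Suc k)" "i \<noteq> crit a k"
    using in_block_iff[of k a i] k i by (auto simp: stable_def)
  have not_crit: "\<not> (\<exists>k'\<in>{1..N}. i = crit a k')"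
  proof
    assume "\<exists>k'\<in>{1..N}. i = crit a k'"
    then obtain k' where "i = crit a k'" by blast
    then have "k' = k"
      using block block_unique[of a k' i k] by simp
    then show False
      using block \<open>i = crit a k'\<close> by simp
  qed
  have "(THE k'. k' \<in> {1..N} \<and> i \<in> stable a k') = k"
  proof (rule the_equality)
    fix k' assume "k' \<in> {1..N} \<and> i \<in> stable a k'"
    then show "k' = k"
      using in_block_iff[of k' a i] block block_unique by auto
  qed (use k i in simp)
  then show ?thesis
    using stable_less_crit_Suc_N[OF k i] not_crit unfolding resp_def by auto
qed

lemma resp_last: "resp N a (numEmp N a) = total N a"
  unfolding resp_def by simp

lemma mono_blk: "mono (blk N a A')"
  unfolding mono_iff_le_Suc by simp

lemma blk_eq_sum: "blk N a A' i = (\<Sum>k \<in> {k \<in> {1..N} - A'. crit a k < i}. a k)"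
proof (induction i)
  case (Suc n)
  have split: "{k \<in> {1..N} - A'. crit a k < Suc n}
      = {k \<in> {1..N} - A'. crit a k < n} \<union> {k \<in> {1..N} - A'. crit a k = n}"
    by (auto simp: less_Suc_eq)
  show ?case
  proof (cases "n = 0")
    case True
    have "crit a k \<ge> 1" if "k \<ge> 1" for k
      using le_crit[of k a] that by linarith
    then have none: "{k \<in> {1..N} - A'. crit a k < Suc n} = {}"
      using True by fastforce
    show ?thesis
      unfolding none using True by simp
  next
    case n: False
    show ?thesis
    proof (cases "\<exists>k \<in> {1..N} - A'. Suc n = crit a k + 1")
      case True
      then obtain k where k: "k \<in> {1..N} - A'" "n = crit a k" by auto
      have "(THE k. k \<in> {1..N} - A' \<and> Suc n = crit a k + 1) = k"
        using k by (intro the_equality) auto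
      moreover have "{k \<in> {1..N} - A'. crit a k = n} = {k}"
        using k by auto
      ultimately show ?thesis
        using n True Suc.IH k unfolding split by (subst sum.union_disjoint) auto
    next
      case False
      then have none: "{k \<in> {1..N} - A'. crit a k = n} = {}"
        by auto
      show ?thesis
        using n False Suc.IH unfolding split none by simp
    qed
  qed
qed simp

text \<open>In \<open>S(A')\<close> block \<open>m\<close> starts after each earlier block \<open>k \<notin> A'\<close> has added its \<open>a k\<close>.\<close>

definition delay :: "nat \<Rightarrow> (nat \<Rightarrow> nat) \<Rightarrow> nat set \<Rightarrow> nat \<Rightarrow> nat" where
  "delay N a A' m = (\<Sum>k \<in> {k \<in> {1..N} - A'. k < m}. a k)"

lemma delay_mono: "m \<le> m' \<Longrightarrow> delay N a A' m \<le> delay N a A' m'"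
  unfolding delay_def by (rule sum_mono2) auto

lemma delay_Suc: "delay N a A' (Suc k) = delay N a A' k + (if k \<in> {1..N} - A' then a k else 0)"
proof -
  have "{k' \<in> {1..N} - A'. k' < Suc k}
      = (if k \<in> {1..N} - A' then insert k else id) {k' \<in> {1..N} - A'. k' < k}"
    by (auto simp: less_Suc_eq)
  then show ?thesis
    unfolding delay_def by simp
qed

lemma delay_Suc_N: "delay N a A' (Suc N) = (\<Sum>k \<in> {1..N} - A'. a k)"
  unfolding delay_def by (rule sum.cong) auto

lemma blk_crit: "blk N a A' (crit a k) = delay N a A' k"
  unfolding blk_eq_sum delay_def by simp

lemma blk_block:
  assumes "crit a k < i" "i \<le> crit a (Suc k)"
  shows "blk N a A' i = delay N a A' (Suc k)"
proof -
  have "crit a k' < i \<longleftrightarrow> k' < Suc k" for k'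
    using assms crit_less_iff[of a k' "Suc k"] crit_le_iff[of a k' k]
    by (metis le_less_trans less_Suc_eq_le linorder_not_less)
  then show ?thesis
    unfolding blk_eq_sum delay_def by simp
qed

definition level :: "nat \<Rightarrow> (nat \<Rightarrow> nat) \<Rightarrow> nat set \<Rightarrow> nat \<Rightarrow> nat" where
  "level N a A' m = delay N a A' m + (\<Sum>j\<in>{1..<m}. a j)"

lemma level_mono: "m \<le> m' \<Longrightarrow> level N a A' m \<le> level N a A' m'"
  unfolding level_def by (intro add_mono delay_mono sum_mono2) auto

lemma blk_resp_crit:
  "k \<in> {1..N} \<Longrightarrow> blk N a A' (crit a k) + resp N a (crit a k) = level N a A' k + a k"
  unfolding level_def blk_crit by (simp add: resp_crit)

lemma blk_resp_stable:
  "k \<in> {1..N} \<Longrightarrow> i \<in> stable a k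
    \<Longrightarrow> blk N a A' i + resp N a i = delay N a A' (Suc k) + (\<Sum>j\<in>{1..<k}. a j)"
  using blk_block[of a k i N A'] stable_less_crit_Suc_N[of k N i a]
  by (auto simp: resp_stable stable_def crit_Suc)

lemma blk_resp_last: "blk N a A' (numEmp N a) + resp N a (numEmp N a) = level N a A' (Suc N)"
proof -
  have "blk N a A' (numEmp N a) = delay N a A' (Suc N)"
    using blk_crit[of N a A' "Suc N"] by (simp add: crit_Suc_N)
  then show ?thesis
    unfolding level_def resp_last total_def by (simp add: atLeastLessThanSuc_atLeastAtMost)
qed

lemma blk_resp_block_bounds:
  assumes k: "k \<in> {1..N}" and i: "crit a k \<le> i" "i < crit a (Suc k)"
  shows "level N a A' k \<le> blk N a A' i + resp N a i \<and> blk N a A' i + resp N a i \<le> level N a A' (Suc k)"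
proof -
  have level_Suc: "level N a A' (Suc k) = delay N a A' (Suc k) + (\<Sum>j\<in>{1..<k}. a j) + a k"
    using k unfolding level_def by simp
  have delay_le: "delay N a A' k \<le> delay N a A' (Suc k)"
    by (simp add: delay_mono)
  from in_block_iff[of k a i] k i consider "i = crit a k" | "i \<in> stable a k"
    by auto
  then show ?thesis
  proof cases
    case 1
    then show ?thesis
      using blk_resp_crit[OF k] level_Suc delay_le by (simp add: level_def)
  next
    case 2
    then show ?thesis
      using blk_resp_stable[OF k 2] level_Suc delay_le by (simp add: level_def)
  qed
qed

lemma level_le_blk_resp_later:
  assumes k: "k \<in> {1..N}" and j: "crit a (Suc k) \<le> j" "j \<le> numEmp N a"
  shows "level N a A' (Suc k) \<le> blk N a A' j + resp N a j"
proof (cases "j = numEmp N a")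
  case True
  then show ?thesis
    using k level_mono[of "Suc k" "Suc N"] by (simp add: blk_resp_last)
next
  case False
  then obtain kj where kj: "kj \<in> {1..N}" "crit a kj \<le> j" "j < crit a (Suc kj)"
    using exists_block[of j a N] j le_crit[of "Suc k" a] by (auto simp: crit_Suc_N)
  then have "crit a (Suc k) < crit a (Suc kj)"
    using j by linarith
  then have "Suc k \<le> kj"
    by simp
  then show ?thesis
    using blk_resp_block_bounds[OF kj, where A' = A'] level_mono[of "Suc k" kj N a A'] by linarith
qed

lemma blk_resp_inversion:
  assumes i: "i \<in> {1..numEmp N a}" and j: "j \<in> {1..numEmp N a}" and "i < j"
    and inv: "blk N a A' j + resp N a j < blk N a A' i + resp N a i"
  shows "\<exists>k \<in> A' \<inter> {1..N}. i = crit a k \<and> j \<in> stable a k"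
proof -
  obtain k where k: "k \<in> {1..N}" "crit a k \<le> i" "i < crit a (Suc k)"
    using exists_block[of i a N] i j \<open>i < j\<close> by (auto simp: crit_Suc_N)
  have "j < crit a (Suc k)"
    using blk_resp_block_bounds[OF k, where A' = A'] level_le_blk_resp_later[OF k(1), where j = j] j inv
    by (meson atLeastAtMost_iff le_trans linorder_not_le)
  then have j_stable: "j \<in> stable a k"
    using in_block_iff[of k a j] k \<open>i < j\<close> by auto
  have "i \<notin> stable a k"
    using blk_resp_stable[OF k(1)] j_stable inv by fastforce
  then have "i = crit a k"
    using in_block_iff[of k a i] k by auto
  then have "k \<in> A' \<inter> {1..N}"
    using inv blk_resp_crit[OF k(1)] blk_resp_stable[OF k(1) j_stable] delay_Suc[of N a A' k] k(1)
    by (auto simp: level_def split: if_splits)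
  then show ?thesis
    using \<open>i = crit a k\<close> j_stable by blast
qed

lemma endt_blockSched: "endt N a (blockSched N a A') i = real (blk N a A' i + resp N a i)"
  unfolding endt_def blockSched_def by simp

lemma bcount_blockSched_le:
  assumes i: "i \<in> {1..numEmp N a}"
  shows "bcount N a (blockSched N a A') i \<le> (\<Sum>k \<in> {k \<in> A'. crit a k = i}. a k)"
proof (cases "\<exists>k\<in>A'. i = crit a k")
  case True
  then obtain k where k: "k \<in> A'" "i = crit a k" by blast
  have "{j \<in> {1..numEmp N a}. i < j \<and> endt N a (blockSched N a A') j < endt N a (blockSched N a A') i}
      \<subseteq> stable a k"
    using blk_resp_inversion[OF i] k by (auto simp: endt_blockSched simp del: of_nat_add)
  then have "bcount N a (blockSched N a A') i \<le> a k"
    unfolding bcount_def by (metis card_mono card_stable finite_stable)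
  moreover have "{k' \<in> A'. crit a k' = i} = {k}"
    using k by auto
  ultimately show ?thesis
    by simp
next
  case False
  then have none: "{j \<in> {1..numEmp N a}. i < j \<and> endt N a (blockSched N a A') j < endt N a (blockSched N a A') i}
      = {}"
    using blk_resp_inversion[OF i] by (force simp: endt_blockSched simp del: of_nat_add)
  show ?thesis
    unfolding bcount_def none by simp
qed

lemma Bval_blockSched_le:
  assumes "A' \<subseteq> {1..N}"
  shows "Bval N a (blockSched N a A') \<le> sum a A'"
proof -
  have "Bval N a (blockSched N a A') \<le> (\<Sum>i\<in>{1..numEmp N a}. \<Sum>k \<in> {k \<in> A'. crit a k = i}. a k)"
    unfolding Bval_def by (intro sum_mono bcount_blockSched_le)
  also have "\<dots> = sum a A'"
  proof (rule sum.group)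
    show "crit a ` A' \<subseteq> {1..numEmp N a}"
      using assms crit_mem_employees by blast
  qed (use assms finite_subset in auto)
  finally show ?thesis .
qed

lemma feasible_blockSched:
  assumes budget: "(\<Sum>k \<in> {1..N} - A'. a k) + W \<le> total N a"
  shows "feasible N a W (blockSched N a A')"
proof -
  let ?M = "numEmp N a"
  let ?e = "\<lambda>i. blk N a A' i + resp N a i"
  have "?e ?M = (\<Sum>k \<in> {1..N} - A'. a k) + total N a"
    by (simp add: blk_resp_last level_def delay_Suc_N total_def atLeastLessThanSuc_atLeastAtMost)
  then have last: "real (?e ?M) \<le> horizon N a W"
    using budget unfolding horizon_def by linarith
  have le_last: "?e i \<le> ?e ?M" if i: "i \<in> {1..?M}" for i
  proof (rule ccontr)
    assume "\<not> ?e i \<le> ?e ?M"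
    moreover have "?M \<in> {1..?M}"
      by (simp add: numEmp_def)
    ultimately obtain k where "k \<in> {1..N}" "?M \<in> stable a k"
      using blk_resp_inversion[OF i, of ?M A'] i by (cases "i = ?M") auto
    then show False
      using stable_less_crit_Suc_N by blast
  qed
  show ?thesis
    unfolding feasible_def
  proof (intro conjI ballI allI impI)
    fix i assume i: "i \<in> {1..?M}"
    show "0 \<le> blockSched N a A' i"
      by (simp add: blockSched_def)
    show "endt N a (blockSched N a A') i \<le> horizon N a W"
      using le_last[OF i] last unfolding endt_blockSched by linarith
  next
    fix i j :: nat assume "i \<le> j"
    then show "blockSched N a A' i \<le> blockSched N a A' j"
      unfolding blockSched_def using monoD[OF mono_blk] by simp
  qed
qed

text \<open>As \<open>r (i_k) = r j + a k\<close> for \<open>j \<in> E^S_k\<close>, this says every stable employee of block \<open>k\<close>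
  ends before \<open>i_k\<close>.\<close>

definition overtaken :: "(nat \<Rightarrow> nat) \<Rightarrow> (nat \<Rightarrow> real) \<Rightarrow> nat \<Rightarrow> bool" where
  "overtaken a s k \<longleftrightarrow> (\<forall>j\<in>stable a k. s j < s (crit a k) + real (a k))"

lemma bcount_crit_ge_if_overtaken:
  assumes k: "k \<in> {1..N}" and "overtaken a s k"
  shows "a k \<le> bcount N a s (crit a k)"
proof -
  have "stable a k \<subseteq> {j \<in> {1..numEmp N a}. crit a k < j \<and> endt N a s j < endt N a s (crit a k)}"
  proof
    fix j assume j: "j \<in> stable a k"
    have "endt N a s j = s j + real (\<Sum>j\<in>{1..<k}. a j)"
      unfolding endt_def resp_stable[OF k j] ..
    moreover have "endt N a s (crit a k) = s (crit a k) + real (\<Sum>j\<in>{1..<k}. a j) + real (a k)"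
      using k unfolding endt_def resp_crit[OF k] by simp
    ultimately have "endt N a s j < endt N a s (crit a k)"
      using \<open>overtaken a s k\<close> j unfolding overtaken_def by force
    then show "j \<in> {j \<in> {1..numEmp N a}. crit a k < j \<and> endt N a s j < endt N a s (crit a k)}"
      using stable_less_crit_Suc_N[OF k j] by simp
  qed
  then have "card (stable a k) \<le> bcount N a s (crit a k)"
    unfolding bcount_def by (rule card_mono[rotated]) simp
  then show ?thesis
    by simp
qed

lemma sum_overtaken_le_Bval: "(\<Sum>k \<in> {k \<in> {1..N}. overtaken a s k}. a k) \<le> Bval N a s"
proof -
  let ?A = "{k \<in> {1..N}. overtaken a s k}"
  have "(\<Sum>k \<in> ?A. a k) \<le> (\<Sum>k \<in> ?A. bcount N a s (crit a k))"
    by (intro sum_mono bcount_crit_ge_if_overtaken) auto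
  also have "\<dots> = (\<Sum>i \<in> crit a ` ?A. bcount N a s i)"
    using strict_mono_imp_inj_on[OF strict_mono_crit] by (simp add: sum.reindex inj_on_subset)
  also have "\<dots> \<le> Bval N a s"
    unfolding Bval_def using crit_mem_employees by (intro sum_mono2) auto
  finally show ?thesis .
qed

lemma feasible_crit_Suc_ge:
  assumes feas: "feasible N a W s" and k: "k \<in> {1..N}"
  shows "s (crit a k) + (if overtaken a s k then 0 else real (a k)) \<le> s (crit a (Suc k))"
proof -
  have mono: "s i \<le> s j" if "1 \<le> i" "i \<le> j" "j \<le> numEmp N a" for i j
    using feas that unfolding feasible_def by blast
  have crit_Suc_le: "crit a (Suc k) \<le> numEmp N a"
    using k crit_le_iff[of a "Suc k" "Suc N"] by (simp add: crit_Suc_N)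
  show ?thesis
  proof (cases "overtaken a s k")
    case True
    then show ?thesis
      using mono[of "crit a k" "crit a (Suc k)"] crit_Suc_le le_crit[of k a] k by simp
  next
    case False
    then obtain j where j: "j \<in> stable a k" "s (crit a k) + real (a k) \<le> s j"
      unfolding overtaken_def by (auto simp: not_less)
    then have "s j \<le> s (crit a (Suc k))"
      using mono[of j "crit a (Suc k)"] stable_less_crit_Suc_N[OF k j(1)] in_block_iff[of k a j] k crit_Suc_le
      by auto
    then show ?thesis
      using False j by simp
  qed
qed

lemma feasible_last_start_ge:
  assumes feas: "feasible N a W s"
  shows "real (\<Sum>k \<in> {k \<in> {1..N}. \<not> overtaken a s k}. a k) \<le> s (numEmp N a)"
proof -
  have "s 1 + real (\<Sum>k \<in> {k \<in> {1..m}. \<not> overtaken a s k}. a k) \<le> s (crit a (Suc m))"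
    if "m \<le> N" for m
    using that
  proof (induction m)
    case (Suc m)
    have "{k \<in> {1..Suc m}. \<not> overtaken a s k}
        = (if overtaken a s (Suc m) then id else insert (Suc m)) {k \<in> {1..m}. \<not> overtaken a s k}"
      by (auto simp: le_Suc_eq)
    then show ?case
      using Suc feasible_crit_Suc_ge[OF feas, of "Suc m"] by (auto split: if_splits)
  qed (simp add: crit_def)
  moreover have "0 \<le> s 1"
    using feas unfolding feasible_def numEmp_def by simp
  ultimately show ?thesis
    using crit_Suc_N[of a N] by fastforce
qed

lemma feasible_delay_budget:
  assumes feas: "feasible N a W s"
  shows "(\<Sum>k \<in> {k \<in> {1..N}. \<not> overtaken a s k}. a k) + W \<le> total N a"
proof -
  have "endt N a s (numEmp N a) \<le> horizon N a W"
    using feas unfolding feasible_def numEmp_def by simp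
  then show ?thesis
    using feasible_last_start_ge[OF feas] unfolding endt_def horizon_def resp_last by linarith
qed

theorem lemma3:
  fixes N W :: nat and a :: "nat \<Rightarrow> nat"
  assumes "N \<ge> 1"
    and "\<forall>j\<in>{1..N}. a j > 0"
    and "W > 0"
    and "W \<le> (\<Sum>j\<in>{1..N}. a j)"
  shows "\<exists>A' \<subseteq> {1..N}. optimal N a W (blockSched N a A')"
proof -
  let ?admissible = "\<lambda>A'. A' \<subseteq> {1..N} \<and> (\<Sum>k \<in> {1..N} - A'. a k) + W \<le> total N a"
  have "?admissible {1..N}"
    using assms(4) by (simp add: total_def)
  then obtain A0 where A0: "?admissible A0"
    and least: "\<forall>A'. ?admissible A' \<longrightarrow> sum a A0 \<le> sum a A'"
    using ex_has_least_nat[of ?admissible "{1..N}" "sum a"] by blast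
  have "Bval N a (blockSched N a A0) \<le> Bval N a s" if feas: "feasible N a W s" for s
  proof -
    let ?A = "{k \<in> {1..N}. overtaken a s k}"
    have "{1..N} - ?A = {k \<in> {1..N}. \<not> overtaken a s k}"
      by blast
    then have "?admissible ?A"
      using feasible_delay_budget[OF feas] by (simp add: subset_iff)
    then have "sum a A0 \<le> sum a ?A"
      using least by blast
    then show ?thesis
      using Bval_blockSched_le[where a = a] A0 sum_overtaken_le_Bval[where s = s and a = a and N = N]
      by (meson order_trans)
  qed
  then show ?thesis
    using A0 feasible_blockSched unfolding optimal_def by blast
qed

end
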